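(* Fix $0<s_{\min}<s_{\max}$ and $\epsilon>0$ small, and let $\alpha=R/(R+d)$. There is $T_*>0$ such that for every $\tilde T\ge T_*$ and every pair of points $r,r'$ on the left arc $\partial\Gamma_L$ of $\partial\Gamma$ (or both on the right arc $\partial\Gamma_R$), there exists a path of a single particle from $r$ to $r'$ consisting of free flights between successive collisions with $\partial\Gamma$ (possibly with specular reflections off $L_u\cup L_d$), with all outgoing speeds $s$ and angles $\varphi$ at $\partial\Gamma$ satisfying $s_{\min}\le s\le s_{\max}$ and $\alpha+\epsilon\le|\sin\varphi|\le1-\epsilon$, which takes precisely time $\tilde T$ to complete. Moreover, these paths can be chosen so that the number of collisions is bounded by a monotone function of $\tilde T$.
   Context: $\Gamma$ is a closed disk of radius $R+d$ with a concentric disk $D$ of radius $R$; vertical segments $L_u,L_d$ above and below $D$ split $\Gamma\setminus D$ into a left and a right half, and a particle is confined to one half, moving in straight lines with constant speed and reflecting specularly off $L_u\cup L_d$. $\varphi$ is the angle of the outgoing velocity with the normal to $\partial\Gamma$ at the emission point; a chord leaving $\partial\Gamma$ with $|\sin\varphi|>\alpha$ does not meet $D$. *)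

theory Defs
  imports "HOL-Analysis.Analysis"
begin

text \<open>Gamma is the closed disk of radius
  R+d about 0, D the disk of radius R about 0, L_u and L_d are the parts of the imaginary
  axis with R <= |Im z| <= R+d. The boolean L selects the half: True = left half
  (Re z <= 0), False = right half (Re z >= 0).\<close>

definition on_side :: "bool \<Rightarrow> complex \<Rightarrow> bool" where
  "on_side L z = (if L then Re z \<le> 0 else 0 \<le> Re z)"

definition arc :: "real \<Rightarrow> bool \<Rightarrow> complex set" where
  "arc \<rho> L = {z. cmod z = \<rho> \<and> on_side L z}"

text \<open>Folding by the mirror in the vertical line Re z = 0: the specular reflections off
  L_u and L_d are modelled by unfolding; the true position is fold_half of the unfolded one.\<close>
definition fold_half :: "bool \<Rightarrow> complex \<Rightarrow> complex" where
  "fold_half L z = (if on_side L z then z else - cnj z)"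

text \<open>Sine of the angle between outgoing velocity v at emission point p on the outer
  circle and the inward normal -p/|p| (signed; only its absolute value is used).\<close>
definition sin_phi :: "complex \<Rightarrow> complex \<Rightarrow> real" where
  "sin_phi p v = Im (cnj (- p) * v) / (cmod p * cmod v)"

text \<open>The unfolded trajectory is p + tau v, the actual one fold_half L (p + tau v); it stays
  off the disk D, so every crossing of the vertical line is a specular reflection off
  L_u or L_d.\<close>
definition free_flight ::
  "real \<Rightarrow> real \<Rightarrow> bool \<Rightarrow> complex \<Rightarrow> complex \<Rightarrow> real \<Rightarrow> complex \<Rightarrow> bool" where
  "free_flight R d L p v t p' \<longleftrightarrow>
     p \<in> arc (R + d) L \<and> 0 < Re (cnj v * (- p)) \<and> 0 < t \<and>
     cmod (p + of_real t * v) = R + d \<and>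
     (\<forall>\<tau>\<in>{0<..<t}. cmod (p + of_real \<tau> * v) < R + d) \<and>
     (\<forall>\<tau>\<in>{0..t}. R < cmod (p + of_real \<tau> * v)) \<and>
     p' = fold_half L (p + of_real t * v)"

end

theory Submission imports Defs begin

text \<open>Unfolded, a trajectory through the reflections off \<open>L\<^sub>u \<union> L\<^sub>d\<close> is a polygon inscribed
  in the outer circle: a chord whose direction makes the angle \<open>g\<close> with the tangent rotates
  the collision point by \<open>2g\<close>, has length \<open>2(R+d) sin g\<close>, keeps the distance \<open>(R+d) cos g > R\<close>
  from the centre, and has \<open>|sin \<phi>| = cos g\<close>. Given \<open>r, r'\<close> and \<open>n\<close> chords, the angles \<open>g\<close>
  with \<open>r' = r cis (2ng)\<close> are \<open>\<pi>/n\<close>-dense, so one of them lies within \<open>\<pi>/(2n)\<close> of a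
  fixed angle \<open>\<gamma>\<close> with \<open>R/(R+d) < cos \<gamma> < 1\<close>. Choosing \<open>n\<close> proportional to \<open>T\<close> and the speed
  \<open>s = 2n(R+d) sin g / T\<close>, the total time is exactly \<open>T\<close>, and \<open>s\<close> tends to a fixed value
  inside \<open>[s_min, s_max]\<close> as \<open>T \<rightarrow> \<infinity>\<close>.\<close>

lemma abs_sin_diff_le: "\<bar>sin (x::real) - sin y\<bar> \<le> \<bar>x - y\<bar>"
proof -
  have h: "\<bar>sin ((x - y) / 2)\<bar> \<le> \<bar>x - y\<bar> / 2"
    using abs_sin_x_le_abs_x[of "(x - y) / 2"] by simp
  have "\<bar>sin ((x - y) / 2)\<bar> * \<bar>cos ((x + y) / 2)\<bar> \<le> \<bar>x - y\<bar> / 2 * 1"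
    by (rule mult_mono) (use h in auto)
  then show ?thesis by (simp add: sin_diff_sin abs_mult)
qed

lemma abs_cos_diff_le: "\<bar>cos (x::real) - cos y\<bar> \<le> \<bar>x - y\<bar>"
proof -
  have h: "\<bar>sin ((y - x) / 2)\<bar> \<le> \<bar>x - y\<bar> / 2"
    using abs_sin_x_le_abs_x[of "(y - x) / 2"] by (simp add: abs_minus_commute)
  have "\<bar>sin ((x + y) / 2)\<bar> * \<bar>sin ((y - x) / 2)\<bar> \<le> 1 * (\<bar>x - y\<bar> / 2)"
    by (rule mult_mono) (use h in auto)
  then show ?thesis by (simp add: cos_diff_cos abs_mult)
qed

lemma exists_angle_close_cis_power:
  fixes r r' :: complex and \<gamma> :: real and m :: nat
  assumes "r \<noteq> 0" and "cmod r' = cmod r" and "0 < m"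
  shows "\<exists>g. \<bar>g - \<gamma>\<bar> \<le> pi / m \<and> r' = r * cis g ^ m"
proof -
  define D where "D = Arg (r' / r)"
  define k where "k = round ((m * \<gamma> - D) / (2 * pi))"
  define g where "g = (D + 2 * pi * of_int k) / m"
  have "r' / r \<noteq> 0"
    using assms by auto
  then have "cis D = r' / r"
    using assms by (simp add: D_def cis_Arg sgn_div_norm norm_divide)
  moreover have "cis g ^ m = cis (real m * g)"
    by (rule Complex.DeMoivre)
  moreover have "real m * g = D + 2 * pi * of_int k"
    using assms by (simp add: g_def)
  moreover have "cis (D + 2 * pi * of_int k) = cis D"
    by (simp add: cis_mult[symmetric])
  ultimately have "r' = r * cis g ^ m"
    using assms by simp
  moreover have "\<bar>of_int k - (m * \<gamma> - D) / (2 * pi)\<bar> \<le> 1 / 2"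
    unfolding k_def by (rule of_int_round_abs_le)
  then have "\<bar>2 * pi * of_int k - (m * \<gamma> - D)\<bar> \<le> pi"
    by (simp add: abs_le_iff field_simps)
  then have "\<bar>g - \<gamma>\<bar> \<le> pi / m"
    using assms by (simp add: g_def abs_le_iff field_simps)
  ultimately show ?thesis by blast
qed

lemma fold_half_neg_cnj: "fold_half L (- cnj z) = fold_half L z"
  by (cases L) (auto simp: fold_half_def on_side_def complex_eq_iff)

lemma norm_fold_half: "cmod (fold_half L z) = cmod z"
  by (auto simp: fold_half_def)

lemma on_side_fold_half: "on_side L (fold_half L z)"
  by (cases L) (auto simp: fold_half_def on_side_def)

lemma fold_half_id: "on_side L z \<Longrightarrow> fold_half L z = z"
  by (simp add: fold_half_def)

lemma norm_Complex_one_minus: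
  assumes "b\<^sup>2 + y\<^sup>2 = 1"
  shows "cmod (Complex (1 - x * b) (x * y)) = sqrt (1 - 2 * x * b + x\<^sup>2)"
proof -
  have "(1 - x * b)\<^sup>2 + (x * y)\<^sup>2 = 1 - 2 * x * b + x\<^sup>2 * (b\<^sup>2 + y\<^sup>2)"
    by (simp add: power2_eq_square algebra_simps)
  then show ?thesis
    using assms by (simp add: cmod_def)
qed

lemma cnj_mult_of_real_mult:
  assumes "cmod p = \<rho>"
  shows "cnj p * (of_real a * p * c) = of_real (a * \<rho>\<^sup>2) * c"
proof -
  have "cnj p * p = of_real (\<rho>\<^sup>2)"
    using assms by (metis complex_norm_square mult.commute)
  then show ?thesis
    by (metis (no_types, lifting) mult.assoc mult.left_commute of_real_mult)
qed

text \<open>In the intended use \<open>b = sin g\<close> and \<open>|y| = cos g\<close>, where \<open>g\<close> is the angle between chord and tangent.\<close>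

lemma free_flight_chord:
  fixes R d s b y :: real and p :: complex
  assumes "0 < R" and "0 < d" and p: "p \<in> arc (R + d) L" and b: "0 < b"
    and by1: "b\<^sup>2 + y\<^sup>2 = 1" and yR: "R < (R + d) * \<bar>y\<bar>" and s: "0 < s"
  defines "v \<equiv> of_real (s / (R + d)) * p * Complex (- b) y"
  shows "free_flight R d L p v (2 * (R + d) * b / s)
           (fold_half L (p * Complex (1 - 2 * b\<^sup>2) (2 * b * y)))"
    and "cmod v = s"
    and "sin_phi p v = - y"
proof -
  define \<rho> where "\<rho> = R + d"
  have rho: "0 < \<rho>"
    using assms by (simp add: \<rho>_def)
  have pn: "cmod p = \<rho>"
    using p by (simp add: arc_def \<rho>_def)
  have orbit: "p + of_real \<tau> * v = p * Complex (1 - (\<tau> * s / \<rho>) * b) ((\<tau> * s / \<rho>) * y)" for \<tau>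
    using rho unfolding v_def \<rho>_def[symmetric] by (simp add: complex_eq_iff field_simps)
  have dist_orbit: "cmod (p + of_real \<tau> * v) = \<rho> * sqrt (1 - 2 * (\<tau> * s / \<rho>) * b + (\<tau> * s / \<rho>)\<^sup>2)" for \<tau>
    unfolding orbit norm_mult pn norm_Complex_one_minus[OF by1] ..
  have "cnj p * v = of_real (s / \<rho> * \<rho>\<^sup>2) * Complex (- b) y"
    unfolding v_def \<rho>_def[symmetric] by (rule cnj_mult_of_real_mult[OF pn])
  also have "s / \<rho> * \<rho>\<^sup>2 = s * \<rho>"
    using rho by (simp add: power2_eq_square)
  finally have cnj_v: "cnj p * v = of_real (s * \<rho>) * Complex (- b) y" .
  have "cmod (Complex (- b) y) = 1"
    using by1 by (simp add: cmod_def)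
  then show vn: "cmod v = s"
    using s rho unfolding v_def \<rho>_def[symmetric] by (simp add: norm_mult norm_divide pn)
  have "cnj (- p) * v = - (cnj p * v)"
    by simp
  then show "sin_phi p v = - y"
    using s rho by (simp add: sin_phi_def vn pn cnj_v)
  show "free_flight R d L p v (2 * (R + d) * b / s)
           (fold_half L (p * Complex (1 - 2 * b\<^sup>2) (2 * b * y)))"
    unfolding free_flight_def \<rho>_def[symmetric]
  proof (intro conjI ballI)
    show "p \<in> arc \<rho> L"
      using p by (simp add: \<rho>_def)
    have "cnj v * - p = - cnj (cnj p * v)"
      by simp
    then show "0 < Re (cnj v * - p)"
      using s rho b by (simp add: cnj_v)
    show "0 < 2 * \<rho> * b / s"
      using rho b s by simp
    have e: "2 * \<rho> * b / s * s / \<rho> = 2 * b"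
      using rho s by simp
    show "cmod (p + of_real (2 * \<rho> * b / s) * v) = \<rho>"
      unfolding dist_orbit e by (simp add: power2_eq_square)
    show "fold_half L (p * Complex (1 - 2 * b\<^sup>2) (2 * b * y)) = fold_half L (p + of_real (2 * \<rho> * b / s) * v)"
      unfolding orbit e by (simp add: power2_eq_square mult.assoc)
  next
    fix \<tau> assume "\<tau> \<in> {0<..<2 * \<rho> * b / s}"
    define x where "x = \<tau> * s / \<rho>"
    have "0 < x" "x < 2 * b"
      using \<open>\<tau> \<in> _\<close> rho s by (auto simp: x_def field_simps)
    then have "1 - 2 * x * b + x\<^sup>2 < 1"
      by (simp add: power2_eq_square)
    then show "cmod (p + of_real \<tau> * v) < \<rho>"
      unfolding dist_orbit x_def[symmetric] using rho by simp
  next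
    fix \<tau> :: real
    have "y\<^sup>2 \<le> 1 - 2 * (\<tau> * s / \<rho>) * b + (\<tau> * s / \<rho>)\<^sup>2"
      using by1 by (smt (verit) power2_diff zero_le_power2)
    then have "\<bar>y\<bar> \<le> sqrt (1 - 2 * (\<tau> * s / \<rho>) * b + (\<tau> * s / \<rho>)\<^sup>2)"
      by (intro real_le_rsqrt) simp
    then show "R < cmod (p + of_real \<tau> * v)"
      unfolding dist_orbit using rho yR \<rho>_def by (smt (verit) mult_left_mono)
  qed
qed

text \<open>The reflections are absorbed by following the unfolded polygon \<open>U k = r cis (2kg)\<close> and
  folding; when \<open>U k\<close> lies in the other half, the chord is emitted from its mirror image with
  the mirrored direction, i.e. with \<open>y = - cos g\<close>.\<close>

lemma inscribed_polygon_path: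
  fixes R d s g :: real and r r' :: complex and n :: nat
  assumes "0 < R" and "0 < d" and r: "r \<in> arc (R + d) L" and r': "r' \<in> arc (R + d) L"
    and sin_g: "0 < sin g" and cos_g: "R < (R + d) * \<bar>cos g\<bar>" and "0 < s"
    and rotation: "r' = r * cis g ^ (2 * n)"
  shows "\<exists>p v t. p 0 = r \<and> p n = r' \<and> (\<Sum>k<n. t k) = real n * (2 * (R + d) * sin g / s) \<and>
           (\<forall>k<n. free_flight R d L (p k) (v k) (t k) (p (Suc k)) \<and>
              cmod (v k) = s \<and> \<bar>sin_phi (p k) (v k)\<bar> = \<bar>cos g\<bar>)"
proof -
  define z where "z = cis g"
  define U where "U k = r * z ^ (2 * k)" for k
  define p where "p k = fold_half L (U k)" for k
  define y where "y k = (if on_side L (U k) then cos g else - cos g)" for k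
  define v where "v k = of_real (s / (R + d)) * p k * Complex (- sin g) (y k)" for k
  define t where "t k = 2 * (R + d) * sin g / s" for k :: nat
  have "on_side L r" "cmod r = R + d" "on_side L r'"
    using r r' by (auto simp: arc_def)
  then have "p 0 = r" "p n = r'"
    using rotation by (simp_all add: p_def U_def z_def fold_half_id)
  moreover have "(\<Sum>k<n. t k) = real n * (2 * (R + d) * sin g / s)"
    by (simp add: t_def)
  moreover have "free_flight R d L (p k) (v k) (t k) (p (Suc k)) \<and>
              cmod (v k) = s \<and> \<bar>sin_phi (p k) (v k)\<bar> = \<bar>cos g\<bar>" for k
  proof -
    have pk: "p k \<in> arc (R + d) L"
      using \<open>cmod r = R + d\<close>
      by (simp add: arc_def p_def norm_fold_half on_side_fold_half U_def norm_mult norm_power z_def)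
    have "(sin g)\<^sup>2 + (y k)\<^sup>2 = 1" "R < (R + d) * \<bar>y k\<bar>"
      using cos_g by (simp_all add: y_def)
    note chord = free_flight_chord[OF assms(1,2) pk sin_g this \<open>0 < s\<close>]
    have U_Suc: "U (Suc k) = U k * z\<^sup>2"
      by (simp add: U_def mult.assoc power_add[symmetric])
    have "fold_half L (p k * Complex (1 - 2 * (sin g)\<^sup>2) (2 * sin g * y k)) = p (Suc k)"
    proof (cases "on_side L (U k)")
      case True
      then have "Complex (1 - 2 * (sin g)\<^sup>2) (2 * sin g * y k) = z\<^sup>2"
        by (simp add: y_def z_def complex_eq_iff power2_eq_square cos_squared_eq algebra_simps)
      with True show ?thesis
        by (simp add: p_def fold_half_id U_Suc)
    next
      case False
      then have "Complex (1 - 2 * (sin g)\<^sup>2) (2 * sin g * y k) = cnj (z\<^sup>2)"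
        by (simp add: y_def z_def complex_eq_iff power2_eq_square cos_squared_eq algebra_simps)
      with False have "p k * Complex (1 - 2 * (sin g)\<^sup>2) (2 * sin g * y k) = - cnj (U (Suc k))"
        by (simp add: p_def fold_half_def U_Suc)
      then show ?thesis
        by (simp add: fold_half_neg_cnj p_def)
    qed
    with chord show ?thesis
      by (simp add: v_def t_def y_def)
  qed
  ultimately show ?thesis
    by blast
qed

lemma timed_polygon_path:
  fixes R d T \<gamma> \<delta> :: real and r r' :: complex and n :: nat
  assumes "0 < R" and "0 < d" and r: "r \<in> arc (R + d) L" and r': "r' \<in> arc (R + d) L"
    and "0 < n" and "0 < T"
    and "pi / (2 * n) \<le> \<delta>" and "pi / (2 * n) < \<gamma>" and "pi / (2 * n) < pi - \<gamma>"
    and cos_\<gamma>: "R < (R + d) * (cos \<gamma> - \<delta>)"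
  shows "\<exists>p v t. p 0 = r \<and> p n = r' \<and> (\<Sum>k<n. t k) = T \<and>
           (\<forall>k<n. free_flight R d L (p k) (v k) (t k) (p (Suc k)) \<and>
              \<bar>T * cmod (v k) - n * (2 * (R + d) * sin \<gamma>)\<bar> \<le> (R + d) * pi \<and>
              cos \<gamma> - \<delta> \<le> \<bar>sin_phi (p k) (v k)\<bar> \<and> \<bar>sin_phi (p k) (v k)\<bar> \<le> cos \<gamma> + \<delta>)"
proof -
  define \<rho> where "\<rho> = R + d"
  have rho: "0 < \<rho>"
    using assms by (simp add: \<rho>_def)
  have "r \<noteq> 0" "cmod r' = cmod r"
    using r r' rho by (auto simp: arc_def \<rho>_def)
  then obtain g where g: "\<bar>g - \<gamma>\<bar> \<le> pi / (2 * n)" and rotation: "r' = r * cis g ^ (2 * n)"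
    using exists_angle_close_cis_power[of r r' "2 * n" \<gamma>] \<open>0 < n\<close> by auto
  have "0 < g" "g < pi"
    using g assms by (auto simp: abs_le_iff)
  then have sin_g: "0 < sin g"
    by (rule sin_gt_zero)
  have "\<bar>cos g - cos \<gamma>\<bar> \<le> \<delta>"
    using abs_cos_diff_le[of g \<gamma>] g assms by linarith
  moreover have "0 < cos \<gamma> - \<delta>"
    using cos_\<gamma> assms rho by (smt (verit) \<rho>_def mult_nonneg_nonpos)
  moreover have "\<rho> * (cos \<gamma> - \<delta>) \<le> \<rho> * cos g"
    using calculation rho by (intro mult_left_mono) auto
  ultimately have cos_g: "R < \<rho> * \<bar>cos g\<bar>" and cos_g_bounds: "cos \<gamma> - \<delta> \<le> \<bar>cos g\<bar>" "\<bar>cos g\<bar> \<le> cos \<gamma> + \<delta>"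
    using cos_\<gamma> by (auto simp: \<rho>_def)
  define s where "s = 2 * n * \<rho> * sin g / T"
  have "0 < s"
    using assms rho sin_g by (simp add: s_def)
  then obtain p v t where p: "p 0 = r" "p n = r'"
    and time: "(\<Sum>k<n. t k) = n * (2 * \<rho> * sin g / s)"
    and flights: "\<forall>k<n. free_flight R d L (p k) (v k) (t k) (p (Suc k)) \<and>
              cmod (v k) = s \<and> \<bar>sin_phi (p k) (v k)\<bar> = \<bar>cos g\<bar>"
    using inscribed_polygon_path[OF assms(1,2) r r' sin_g _ _ rotation] cos_g
    unfolding \<rho>_def by blast
  have "n * (2 * \<rho> * sin g / s) = T"
    using assms rho sin_g by (simp add: s_def)
  have "T * s - n * (2 * \<rho> * sin \<gamma>) = n * (2 * \<rho>) * (sin g - sin \<gamma>)"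
    using assms by (simp add: s_def algebra_simps)
  then have "\<bar>T * s - n * (2 * \<rho> * sin \<gamma>)\<bar> = n * (2 * \<rho>) * \<bar>sin g - sin \<gamma>\<bar>"
    using rho by (simp add: abs_mult)
  also have "\<dots> \<le> n * (2 * \<rho>) * (pi / (2 * n))"
    using abs_sin_diff_le[of g \<gamma>] g rho by (intro mult_left_mono) auto
  also have "\<dots> = \<rho> * pi"
    using assms by simp
  finally show ?thesis
    using p time flights \<open>n * (2 * \<rho> * sin g / s) = T\<close> cos_g_bounds
    unfolding \<rho>_def by (intro exI[of _ p] exI[of _ v] exI[of _ t]) auto
qed

lemma nat_ceiling_mult_bounds:
  fixes T c \<tau> :: real
  assumes "0 < c" and "0 < \<tau>" and "pi / (2 * \<tau> * c) \<le> T"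
  defines "n \<equiv> nat \<lceil>T * c\<rceil>"
  shows "T * c \<le> n" and "n < T * c + 1" and "0 < n" and "pi / real (2 * n) \<le> \<tau>"
proof -
  have "0 < T"
    using assms by (smt (verit) divide_pos_pos mult_pos_pos pi_gt_zero)
  then show "T * c \<le> n" "n < T * c + 1"
    using assms by (auto simp: n_def) linarith
  have "pi \<le> 2 * \<tau> * (T * c)"
    using assms by (simp add: divide_le_eq mult_ac)
  also have "\<dots> \<le> 2 * \<tau> * n"
    using \<open>T * c \<le> n\<close> assms by simp
  finally have "pi \<le> 2 * \<tau> * n" .
  then show "0 < n"
    using pi_gt_zero by (cases n) auto
  with \<open>pi \<le> 2 * \<tau> * n\<close> show "pi / real (2 * n) \<le> \<tau>"
    by (simp add: divide_le_eq mult_ac)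
qed

lemma abs_diff_le_of_mult_approx:
  fixes T x c h m e l :: real
  assumes "0 < T" and "\<bar>T * x - m\<bar> \<le> e" and "T * c \<le> m" and "m < T * c + l"
    and "l + e \<le> T * h"
  shows "\<bar>x - c\<bar> \<le> h"
proof -
  have "T * (x - c) \<le> T * h" "T * (c - x) \<le> T * h"
    using assms(2-5) unfolding abs_le_iff right_diff_distrib by linarith+
  with \<open>0 < T\<close> show ?thesis
    by (simp add: abs_le_iff)
qed

lemma exists_arccos_window:
  fixes a b :: real
  assumes "0 < a" and "a < b" and "b < 1"
  shows "\<exists>\<gamma> \<delta>. 0 < \<gamma> \<and> \<gamma> < pi \<and> 0 < \<delta> \<and> cos \<gamma> - \<delta> = a \<and> cos \<gamma> + \<delta> = b"
proof -
  have "-1 < (a + b) / 2" "(a + b) / 2 < 1"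
    using assms by auto
  then have "cos (arccos ((a + b) / 2)) = (a + b) / 2"
    and "0 < arccos ((a + b) / 2)" "arccos ((a + b) / 2) < pi"
    using arccos_lt_bounded[of "(a + b) / 2"] by simp_all
  with assms show ?thesis
    by (intro exI[of _ "arccos ((a + b) / 2)"] exI[of _ "(b - a) / 2"]) (simp add: field_simps)
qed

text \<open>The reference chord makes the angle \<open>\<gamma>\<close> with \<open>cos \<gamma> = (a + b)/2\<close> with the tangent, so
  chords within \<open>\<delta> = (b - a)/2\<close> of it have \<open>a \<le> |sin \<phi>| \<le> b\<close>. With \<open>n \<approx> T s\<^sub>0 / l\<close> chords,
  where \<open>l\<close> is the length of the reference chord and \<open>s\<^sub>0\<close> the midpoint of the speed range, the
  speed deviates from \<open>s\<^sub>0\<close> by \<open>O(1/T)\<close>.\<close>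

lemma exists_timed_paths:
  fixes R d s_min s_max a b :: real
  assumes "0 < R" and "0 < d" and "0 < s_min" and "s_min < s_max"
    and "R / (R + d) < a" and "a < b" and "b < 1"
  shows "\<exists>T_star>0. \<exists>N :: real \<Rightarrow> nat. mono N \<and>
      (\<forall>T\<ge>T_star. \<forall>L r r'. r \<in> arc (R + d) L \<and> r' \<in> arc (R + d) L \<longrightarrow>
        (\<exists>n p v t. n \<le> N T \<and> p 0 = r \<and> p n = r' \<and> (\<Sum>k<n. t k) = T \<and>
           (\<forall>k<n. free_flight R d L (p k) (v k) (t k) (p (Suc k)) \<and>
              s_min \<le> cmod (v k) \<and> cmod (v k) \<le> s_max \<and>
              a \<le> \<bar>sin_phi (p k) (v k)\<bar> \<and> \<bar>sin_phi (p k) (v k)\<bar> \<le> b)))"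
proof -
  have "0 < R / (R + d)"
    using assms by simp
  then have "0 < a"
    using assms by linarith
  then obtain \<gamma> \<delta> where \<gamma>: "0 < \<gamma>" "\<gamma> < pi" and "0 < \<delta>"
    and cos_\<gamma>: "cos \<gamma> - \<delta> = a" "cos \<gamma> + \<delta> = b"
    using exists_arccos_window assms by blast
  define \<rho> where "\<rho> = R + d"
  define l where "l = 2 * \<rho> * sin \<gamma>"
  define s\<^sub>0 where "s\<^sub>0 = (s_min + s_max) / 2"
  define h where "h = (s_max - s_min) / 2"
  define \<tau> where "\<tau> = min \<delta> (min (\<gamma> / 2) ((pi - \<gamma>) / 2))"
  define N :: "real \<Rightarrow> nat" where "N T = nat \<lceil>T * (s\<^sub>0 / l)\<rceil>" for T
  define T_star where "T_star = max ((l + \<rho> * pi) / h) (pi / (2 * \<tau> * (s\<^sub>0 / l))) + 1"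
  have "R < (R + d) * (cos \<gamma> - \<delta>)"
    using assms by (simp add: cos_\<gamma> field_simps)
  have pos: "0 < \<rho>" "0 < l" "0 < s\<^sub>0" "0 < h" "0 < \<tau>"
    using assms \<gamma> \<open>0 < \<delta>\<close> sin_gt_zero[of \<gamma>] by (auto simp: \<rho>_def l_def s\<^sub>0_def h_def \<tau>_def)
  then have "0 < T_star"
    unfolding T_star_def by (smt (verit) divide_pos_pos mult_pos_pos pi_gt_zero)
  moreover have "mono N"
    unfolding N_def mono_def using pos
    by (intro allI impI nat_mono ceiling_mono mult_right_mono) auto
  moreover have "\<exists>n p v t. n \<le> N T \<and> p 0 = r \<and> p n = r' \<and> (\<Sum>k<n. t k) = T \<and>
           (\<forall>k<n. free_flight R d L (p k) (v k) (t k) (p (Suc k)) \<and>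
              s_min \<le> cmod (v k) \<and> cmod (v k) \<le> s_max \<and>
              a \<le> \<bar>sin_phi (p k) (v k)\<bar> \<and> \<bar>sin_phi (p k) (v k)\<bar> \<le> b)"
    if T: "T_star \<le> T" and r: "r \<in> arc (R + d) L" and r': "r' \<in> arc (R + d) L" for T L r r'
  proof -
    define n where "n = N T"
    have "0 < T"
      using T \<open>0 < T_star\<close> by simp
    have "pi / (2 * \<tau> * (s\<^sub>0 / l)) \<le> T"
      using T by (simp add: T_star_def)
    then have count: "T * (s\<^sub>0 / l) \<le> n" "n < T * (s\<^sub>0 / l) + 1" "0 < n" "pi / (2 * n) \<le> \<tau>"
      using nat_ceiling_mult_bounds[of "s\<^sub>0 / l" \<tau> T] pos unfolding n_def N_def by auto
    then have n: "T * s\<^sub>0 \<le> n * l" "n * l < T * s\<^sub>0 + l"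
      using pos by (simp_all add: field_simps)
    have close: "pi / (2 * n) \<le> \<delta>" "pi / (2 * n) < \<gamma>" "pi / (2 * n) < pi - \<gamma>"
      using count(4) \<gamma> by (auto simp: \<tau>_def)
    obtain p v t where p: "p 0 = r" "p n = r'" "(\<Sum>k<n. t k) = T"
      and flights: "\<forall>k<n. free_flight R d L (p k) (v k) (t k) (p (Suc k)) \<and>
              \<bar>T * cmod (v k) - n * l\<bar> \<le> \<rho> * pi \<and>
              a \<le> \<bar>sin_phi (p k) (v k)\<bar> \<and> \<bar>sin_phi (p k) (v k)\<bar> \<le> b"
      using timed_polygon_path[OF assms(1,2) r r' count(3) \<open>0 < T\<close> close \<open>R < (R + d) * (cos \<gamma> - \<delta>)\<close>]
      unfolding l_def \<rho>_def cos_\<gamma> by blast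
    have "(l + \<rho> * pi) / h \<le> T"
      using T by (simp add: T_star_def)
    then have "l + \<rho> * pi \<le> T * h"
      using pos by (simp add: field_simps)
    then have speed: "\<bar>cmod (v k) - s\<^sub>0\<bar> \<le> h" if "k < n" for k
      using abs_diff_le_of_mult_approx[OF \<open>0 < T\<close> _ n] flights that by blast
    have "s_min \<le> cmod (v k) \<and> cmod (v k) \<le> s_max" if "k < n" for k
      using speed[OF that] unfolding s\<^sub>0_def h_def abs_le_iff by argo
    then show ?thesis
      using p flights \<open>0 < T\<close>
      by (intro exI[of _ n] exI[of _ p] exI[of _ v] exI[of _ t]) (auto simp: n_def)
  qed
  ultimately show ?thesis
    by blast
qed

theorem lemma3:
  fixes R d s_min s_max :: real
  assumes "0 < R" and "0 < d" and "0 < s_min" and "s_min < s_max"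
  shows "\<exists>\<epsilon>0>0. \<forall>\<epsilon>. 0 < \<epsilon> \<and> \<epsilon> < \<epsilon>0 \<longrightarrow>
    (\<exists>T_star>0. \<exists>N :: real \<Rightarrow> nat. mono N \<and>
      (\<forall>T\<ge>T_star. \<forall>L r r'. r \<in> arc (R + d) L \<and> r' \<in> arc (R + d) L \<longrightarrow>
        (\<exists>n p v t. n \<le> N T \<and> p 0 = r \<and> p n = r' \<and> (\<Sum>k<n. t k) = T \<and>
           (\<forall>k<n. free_flight R d L (p k) (v k) (t k) (p (Suc k)) \<and>
              s_min \<le> cmod (v k) \<and> cmod (v k) \<le> s_max \<and>
              R / (R + d) + \<epsilon> \<le> \<bar>sin_phi (p k) (v k)\<bar> \<and>
              \<bar>sin_phi (p k) (v k)\<bar> \<le> 1 - \<epsilon>))))"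
proof (rule exI[of _ "(1 - R / (R + d)) / 2"], intro conjI allI impI)
  show "0 < (1 - R / (R + d)) / 2"
    using assms by simp
next
  fix \<epsilon> :: real
  assume "0 < \<epsilon> \<and> \<epsilon> < (1 - R / (R + d)) / 2"
  then have "R / (R + d) < R / (R + d) + \<epsilon>" "R / (R + d) + \<epsilon> < 1 - \<epsilon>" "1 - \<epsilon> < 1"
    by auto
  then show "\<exists>T_star>0. \<exists>N :: real \<Rightarrow> nat. mono N \<and>
      (\<forall>T\<ge>T_star. \<forall>L r r'. r \<in> arc (R + d) L \<and> r' \<in> arc (R + d) L \<longrightarrow>
        (\<exists>n p v t. n \<le> N T \<and> p 0 = r \<and> p n = r' \<and> (\<Sum>k<n. t k) = T \<and>
           (\<forall>k<n. free_flight R d L (p k) (v k) (t k) (p (Suc k)) \<and>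
              s_min \<le> cmod (v k) \<and> cmod (v k) \<le> s_max \<and>
              R / (R + d) + \<epsilon> \<le> \<bar>sin_phi (p k) (v k)\<bar> \<and>
              \<bar>sin_phi (p k) (v k)\<bar> \<le> 1 - \<epsilon>)))"
    by (rule exists_timed_paths[OF assms])
qed

end
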